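(* Let $IS\in\{\Box,\blacksquare\}^2$. There is no correct compositional translation from $\mathrm{SYNCSIMPLE}$ into $\mathrm{LOCKSIMPLE}_{2,IS}$ of blocking type $(P_1P_1,P_2)$.
   Context: $\mathrm{SYNCSIMPLE}$: subprocesses $\mathcal{U} ::= \checkmark \mid 0 \mid\, !\mathcal{U} \mid\, ?\mathcal{U}$; processes are finite parallel compositions ($\mid$ associative, commutative, $0$ a unit). Reduction: $!\mathcal{U}_1\mid ?\mathcal{U}_2\mid \mathcal{P}\to \mathcal{U}_1\mid\mathcal{U}_2\mid\mathcal{P}$. Successful: of form $\checkmark\mid\mathcal{P}$; may-convergent: reduces to a successful process; must-convergent: every reachable process is may-convergent. $\mathrm{LOCKSIMPLE}_{k,IS}$ ($IS\in\{\Box,\blacksquare\}^k$, $\Box$ empty, $\blacksquare$ full): subprocesses are words over $\{P_1,T_1,\dots,P_k,T_k\}$ followed by $0$ or $\checkmark$; states $(\mathcal{P},C)$ reduce by $(P_i\mathcal{U}\mid\mathcal{P},C)\to(\mathcal{U}\mid\mathcal{P},C[C_i:=\blacksquare])$ only if $C_i=\Box$, and $(T_i\mathcal{U}\mid\mathcal{P},C)\to(\mathcal{U}\mid\mathcal{P},C[C_i:=\Box])$ always. Success = process contains $\checkmark$; a process $\mathcal{P}$ is may/must-convergent iff the state $(\mathcal{P},IS)$ is. A compositional translation $\tau$ is given by words $\tau(!),\tau(?)$ with $\tau(0)=0$, $\tau(\checkmark)=\checkmark$, $\tau(!\mathcal{U})=\tau(!)\tau(\mathcal{U})$, $\tau(?\mathcal{U})=\tau(?)\tau(\mathcal{U})$,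 $\tau$ commuting with $\mid$; correct = preserves and reflects may- and must-convergence. Blocking type: for a word $S$, run $S$ as a single subprocess from $IS$; if it gets stuck at an occurrence of $P_i$, that occurrence ends the blocking prefix; if it is the first symbol from $\{P_i,T_i\}$ in $S$ the blocking type is $P_i$, otherwise the blocking prefix has form $R_1P_iR_2P_i$ with $R_2$ containing no $P_i,T_i$ and the blocking type is $P_iP_i$. $\tau$ has blocking type $(W_1,W_2)$ if $\tau(!)$ has type $W_1$ and $\tau(?)$ type $W_2$. *)

theory Defs
  imports Main "HOL-Library.Multiset"
begin

datatype ssub = SCheck | SZero | SSend ssub | SRecv ssub

(* a process is a finite parallel composition = multiset of subprocesses *)
type_synonym sproc = "ssub multiset"

inductive sstep :: "sproc \<Rightarrow> sproc \<Rightarrow> bool" where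
  "sstep ({#SSend u1, SRecv u2#} + p) ({#u1, u2#} + p)"

definition ssuccessful :: "sproc \<Rightarrow> bool" where
  "ssuccessful p \<longleftrightarrow> SCheck \<in># p"

definition smay :: "sproc \<Rightarrow> bool" where
  "smay p \<longleftrightarrow> (\<exists>q. sstep\<^sup>*\<^sup>* p q \<and> ssuccessful q)"

definition smust :: "sproc \<Rightarrow> bool" where
  "smust p \<longleftrightarrow> (\<forall>q. sstep\<^sup>*\<^sup>* p q \<longrightarrow> smay q)"

(* P i = take lock i, T i = put/release lock i; locks are indexed 1..k *)
datatype lsym = P nat | T nat

fun lidx :: "lsym \<Rightarrow> nat" where
  "lidx (P i) = i" | "lidx (T i) = i"

definition wf_word :: "nat \<Rightarrow> lsym list \<Rightarrow> bool" where
  "wf_word k w \<longleftrightarrow> (\<forall>s\<in>set w. 1 \<le> lidx s \<and> lidx s \<le> k)"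

(* subprocess: word followed by 0 (False) or checkmark (True) *)
type_synonym lsub = "lsym list \<times> bool"
type_synonym lproc = "lsub multiset"
(* lock store: True = full (\<blacksquare>), False = empty (\<box>) *)
type_synonym lstore = "nat \<Rightarrow> bool"

inductive lstep :: "(lproc \<times> lstore) \<Rightarrow> (lproc \<times> lstore) \<Rightarrow> bool" where
  lstepP: "\<not> C i \<Longrightarrow> lstep ({#(P i # w, e)#} + p, C) ({#(w, e)#} + p, C(i := True))"
| lstepT: "lstep ({#(T i # w, e)#} + p, C) ({#(w, e)#} + p, C(i := False))"

definition lsuccessful :: "lproc \<times> lstore \<Rightarrow> bool" where
  "lsuccessful s \<longleftrightarrow> ([], True) \<in># fst s"

definition lmay :: "lproc \<times> lstore \<Rightarrow> bool" where
  "lmay s \<longleftrightarrow> (\<exists>s'. lstep\<^sup>*\<^sup>* s s' \<and> lsuccessful s')"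

definition lmust :: "lproc \<times> lstore \<Rightarrow> bool" where
  "lmust s \<longleftrightarrow> (\<forall>s'. lstep\<^sup>*\<^sup>* s s' \<longrightarrow> lmay s')"

(* tau given by words ws = tau(!) and wr = tau(?) *)
fun trsub :: "lsym list \<Rightarrow> lsym list \<Rightarrow> ssub \<Rightarrow> lsub" where
  "trsub ws wr SCheck = ([], True)"
| "trsub ws wr SZero = ([], False)"
| "trsub ws wr (SSend u) = (ws @ fst (trsub ws wr u), snd (trsub ws wr u))"
| "trsub ws wr (SRecv u) = (wr @ fst (trsub ws wr u), snd (trsub ws wr u))"

definition trproc :: "lsym list \<Rightarrow> lsym list \<Rightarrow> sproc \<Rightarrow> lproc" where
  "trproc ws wr p = image_mset (trsub ws wr) p"

definition correct_translation :: "lstore \<Rightarrow> lsym list \<Rightarrow> lsym list \<Rightarrow> bool" where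
  "correct_translation IS ws wr \<longleftrightarrow>
     (\<forall>p. (smay p \<longleftrightarrow> lmay (trproc ws wr p, IS)) \<and>
          (smust p \<longleftrightarrow> lmust (trproc ws wr p, IS)))"

(* running a single word from a store; None = stuck *)
fun exec :: "lstore \<Rightarrow> lsym list \<Rightarrow> lstore option" where
  "exec C [] = Some C"
| "exec C (P i # w) = (if C i then None else exec (C(i := True)) w)"
| "exec C (T i # w) = exec (C(i := False)) w"

(* u @ [P i] is the blocking prefix of S (run from IS): u runs through,
   and then P i is blocked because lock i is full *)
definition blocking_prefix :: "lstore \<Rightarrow> lsym list \<Rightarrow> lsym list \<Rightarrow> nat \<Rightarrow> bool" where
  "blocking_prefix IS S u i \<longleftrightarrow>
     (\<exists>v C. S = u @ P i # v \<and> exec IS u = Some C \<and> C i)"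

definition btype_P :: "lstore \<Rightarrow> lsym list \<Rightarrow> nat \<Rightarrow> bool" where
  "btype_P IS S i \<longleftrightarrow>
     (\<exists>u. blocking_prefix IS S u i \<and> P i \<notin> set u \<and> T i \<notin> set u)"

definition btype_PP :: "lstore \<Rightarrow> lsym list \<Rightarrow> nat \<Rightarrow> bool" where
  "btype_PP IS S i \<longleftrightarrow>
     (\<exists>u. blocking_prefix IS S u i \<and>
        (\<exists>R1 R2. u = R1 @ P i # R2 \<and> P i \<notin> set R2 \<and> T i \<notin> set R2))"

end

theory Submission
  imports Defs
begin

text \<open>
  Lock 2 is initially full, since the blocking prefix of the receiver word stops at its first
  operation on lock 2. As words only use locks 1 and 2, the sender prefix, which ends by taking
  lock 1 and then leaves it alone, runs to that point from every store in which lock 1 is empty,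
  and afterwards lock 1 is full. Consider the translation of \<open>?0 | !\<checkmark> | \<dots> | !\<checkmark>\<close>,
  which is must-convergent. Run one sender until it waits on lock 1, then run the receiver as far
  as it goes. Whenever this empties lock 1, park a fresh sender at its \<open>P\<^sub>1\<close> again, which
  fills lock 1. The receiver strictly advances in each round, so eventually every subprocess is
  blocked and no \<open>\<checkmark>\<close> has been produced: the translated process is not must-convergent.
\<close>

fun blocked :: "lstore \<Rightarrow> lsym list \<Rightarrow> bool" where
  "blocked C [] = True"
| "blocked C (P i # w) = C i"
| "blocked C (T i # w) = False"

lemma exec_append:
  "exec C (u @ w) = (case exec C u of None \<Rightarrow> None | Some C' \<Rightarrow> exec C' w)"
proof (induction u arbitrary: C)
  case (Cons s u)
  then show ?case
    by (cases s) (simp_all add: fun_upd_def)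
qed simp

lemma exec_unchanged:
  "exec C w = Some C' \<Longrightarrow> P i \<notin> set w \<Longrightarrow> T i \<notin> set w \<Longrightarrow> C' i = C i"
proof (induction w arbitrary: C)
  case (Cons s w)
  then show ?case by (cases s) (auto split: if_splits)
qed simp

lemma exec_last_P_full:
  assumes "exec C (u @ P i # w) = Some C'" and "P i \<notin> set w" and "T i \<notin> set w"
  shows "C' i"
proof -
  from assms(1) obtain C1 where "exec C1 (P i # w) = Some C'"
    by (auto simp: exec_append split: option.splits)
  then have "exec (C1(i := True)) w = Some C'"
    by (auto split: if_splits)
  from exec_unchanged[OF this assms(2,3)] show ?thesis by simp
qed

lemma exec_from_emptier_store:
  assumes "exec C w = Some C'" and "\<forall>s\<in>set w. E (lidx s) \<longrightarrow> C (lidx s)"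
  shows "\<exists>E'. exec E w = Some E'"
  using assms
proof (induction w arbitrary: C E)
  case (Cons s w)
  show ?case
  proof (cases s)
    case (P j)
    with Cons.prems have "exec (C(j := True)) w = Some C'" and "\<not> E j"
      by (auto split: if_splits)
    moreover have "\<forall>s\<in>set w. (E(j := True)) (lidx s) \<longrightarrow> (C(j := True)) (lidx s)"
      using Cons.prems(2) by auto
    ultimately show ?thesis using Cons.IH P by auto
  next
    case (T j)
    with Cons.prems have "exec (C(j := False)) w = Some C'"
      by simp
    moreover have "\<forall>s\<in>set w. (E(j := False)) (lidx s) \<longrightarrow> (C(j := False)) (lidx s)"
      using Cons.prems(2) by auto
    ultimately show ?thesis using Cons.IH T by auto
  qed
qed simp

lemma exec_maximal_prefix:
  "\<exists>u w' C'. w = u @ w' \<and> exec C u = Some C' \<and> blocked C' w'"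
proof (induction w arbitrary: C)
  case Nil
  show ?case by simp
next
  case (Cons s w)
  show ?case
  proof (cases "blocked C (s # w)")
    case True
    then show ?thesis by force
  next
    case False
    define C1 where "C1 = (case s of P j \<Rightarrow> C(j := True) | T j \<Rightarrow> C(j := False))"
    from False have step: "exec C (s # u) = exec C1 u" for u
      unfolding C1_def by (cases s) simp_all
    from Cons.IH[of C1] obtain u w' C' where "w = u @ w'" "exec C1 u = Some C'" "blocked C' w'"
      by blast
    then have "s # w = (s # u) @ w'" and "exec C (s # u) = Some C'"
      by (simp_all add: step)
    with \<open>blocked C' w'\<close> show ?thesis by blast
  qed
qed

lemma lsteps_exec:
  "exec C u = Some C' \<Longrightarrow> lstep\<^sup>*\<^sup>* (add_mset (u @ w, e) M, C) (add_mset (w, e) M, C')"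
proof (induction u arbitrary: C)
  case (Cons s u)
  show ?case
  proof (cases s)
    case (P j)
    with Cons.prems have "\<not> C j" and "exec (C(j := True)) u = Some C'"
      by (auto split: if_splits)
    with lstepP[of C j "u @ w" e M] Cons.IH show ?thesis
      using P by (auto intro: converse_rtranclp_into_rtranclp)
  next
    case (T j)
    with Cons.prems have "exec (C(j := False)) u = Some C'"
      by simp
    with lstepT[of j "u @ w" e M C] Cons.IH show ?thesis
      using T by (auto intro: converse_rtranclp_into_rtranclp)
  qed
qed simp

lemma no_lstep_if_blocked:
  assumes "\<forall>x\<in>#M. blocked C (fst x)"
  shows "\<not> lstep (M, C) s"
proof
  assume "lstep (M, C) s"
  then show False
    using assms by (cases rule: lstep.cases) auto
qed

lemma lmust_lsteps: "lmust s \<Longrightarrow> lstep\<^sup>*\<^sup>* s s' \<Longrightarrow> lmust s'"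
  unfolding lmust_def by (meson rtranclp_trans)

lemma not_lmust_if_deadlocked:
  assumes "\<forall>x\<in>#M. blocked C (fst x)" and "([], True) \<notin># M"
  shows "\<not> lmust (M, C)"
proof -
  have "lstep\<^sup>*\<^sup>* (M, C) s \<Longrightarrow> s = (M, C)" for s
    using no_lstep_if_blocked[OF assms(1)] by (auto elim: converse_rtranclpE)
  then have "\<not> lmay (M, C)"
    using assms(2) unfolding lmay_def lsuccessful_def by auto
  then show ?thesis
    unfolding lmust_def by blast
qed

text \<open>
  \<open>M\<close> holds the copies already parked at \<open>P i\<close>. Each round either deadlocks with lock \<open>i\<close>
  full, or advances \<open>r\<close> and then parks one more copy of \<open>u @ P i # v\<close>, refilling lock \<open>i\<close>.
\<close>
lemma not_lmust_parking:
  assumes parks: "\<And>E. \<not> E i \<Longrightarrow> \<exists>E'. exec E u = Some E' \<and> E' i"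
    and "C i" and "\<forall>x\<in>#M. \<exists>w e. x = (P i # w, e)"
  shows "\<exists>k. \<not> lmust (add_mset (r, False) (M + replicate_mset k (u @ P i # v, e)), C)"
  using assms(2,3)
proof (induction "length r" arbitrary: r M C rule: less_induct)
  case less
  obtain r1 r2 C1 where r: "r = r1 @ r2" and run: "exec C r1 = Some C1" and "blocked C1 r2"
    using exec_maximal_prefix by blast
  show ?case
  proof (cases "C1 i")
    case True
    with \<open>blocked C1 r2\<close> less.prems(2) have "\<not> lmust (add_mset (r2, False) M, C1)"
      by (intro not_lmust_if_deadlocked) auto
    moreover have "lstep\<^sup>*\<^sup>* (add_mset (r, False) M, C) (add_mset (r2, False) M, C1)"
      using lsteps_exec[OF run] r by simp
    ultimately have "\<not> lmust (add_mset (r, False) (M + replicate_mset 0 (u @ P i # v, e)), C)"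
      using lmust_lsteps by auto
    then show ?thesis ..
  next
    case False
    with less.prems(1) run have "r1 \<noteq> []" by auto
    with r have shorter: "length r2 < length r" by simp
    from parks[of C1, OF False] obtain C2 where park: "exec C1 u = Some C2" and "C2 i" by blast
    let ?M = "add_mset (P i # v, e) M"
    let ?W = "\<lambda>k. replicate_mset k (u @ P i # v, e)"
    from less.hyps[of r2 C2 ?M, OF shorter \<open>C2 i\<close>] less.prems(2)
    obtain k where stuck: "\<not> lmust (add_mset (r2, False) (?M + ?W k), C2)"
      by auto
    have "lstep\<^sup>*\<^sup>* (add_mset (r, False) (M + ?W (Suc k)), C)
                     (add_mset (r2, False) (M + ?W (Suc k)), C1)"
      using lsteps_exec[OF run] r by simp
    also have "add_mset (r2, False) (M + ?W (Suc k))
             = add_mset (u @ P i # v, e) (add_mset (r2, False) (M + ?W k))"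
      by simp
    also have "lstep\<^sup>*\<^sup>* (add_mset (u @ P i # v, e) (add_mset (r2, False) (M + ?W k)), C1)
                     (add_mset (P i # v, e) (add_mset (r2, False) (M + ?W k)), C2)"
      by (rule lsteps_exec[OF park])
    also have "add_mset (P i # v, e) (add_mset (r2, False) (M + ?W k))
             = add_mset (r2, False) (?M + ?W k)"
      by simp
    finally have "\<not> lmust (add_mset (r, False) (M + ?W (Suc k)), C)"
      using stuck lmust_lsteps by blast
    then show ?thesis ..
  qed
qed

lemma btype_P_initially_full: "btype_P IS w i \<Longrightarrow> IS i"
  unfolding btype_P_def blocking_prefix_def by (auto dest: exec_unchanged)

lemma btype_PP_parks:
  assumes "btype_PP IS w i" and others_full: "\<forall>s\<in>set w. lidx s = i \<or> IS (lidx s)"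
  obtains u v C where "w = u @ P i # v" and "exec IS u = Some C" and "C i"
    and "\<And>E. \<not> E i \<Longrightarrow> \<exists>E'. exec E u = Some E' \<and> E' i"
proof -
  from assms(1) obtain u v C R1 R2 where w: "w = u @ P i # v" and run: "exec IS u = Some C"
    and "C i" and u: "u = R1 @ P i # R2" and "P i \<notin> set R2" "T i \<notin> set R2"
    unfolding btype_PP_def blocking_prefix_def by blast
  have "\<exists>E'. exec E u = Some E' \<and> E' i" if "\<not> E i" for E
  proof -
    have "\<forall>s\<in>set u. E (lidx s) \<longrightarrow> IS (lidx s)"
      using others_full \<open>\<not> E i\<close> w by auto
    with exec_from_emptier_store[OF run] obtain E' where "exec E u = Some E'" by blast
    moreover from this have "E' i"
      using exec_last_P_full \<open>P i \<notin> set R2\<close> \<open>T i \<notin> set R2\<close> u by blast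
    ultimately show ?thesis by blast
  qed
  with that w run \<open>C i\<close> show ?thesis by blast
qed

lemma smust_recv_sends:
  "smust (add_mset (SRecv SZero) (replicate_mset (Suc k) (SSend SCheck)))"
  (is "smust ?p")
proof -
  have succ: "SCheck \<in># q" if "sstep ?p q" for q
    using that
  proof (cases rule: sstep.cases)
    case (1 u1 u2 p)
    then have "SSend u1 \<in># ?p" by simp
    then have "u1 = SCheck" by (auto split: if_splits)
    with 1 show ?thesis by simp
  qed
  have keeps: "SCheck \<in># q" if "sstep q' q" and "SCheck \<in># q'" for q q'
    using that by (cases rule: sstep.cases) auto
  have reach: "q = ?p \<or> SCheck \<in># q" if "sstep\<^sup>*\<^sup>* ?p q" for q
    using that by (induction rule: rtranclp_induct) (auto intro: succ keeps)
  have "sstep ?p ({#SCheck, SZero#} + replicate_mset k (SSend SCheck))"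
    using sstep.intros[of SCheck SZero "replicate_mset k (SSend SCheck)"]
    by (simp add: add_mset_commute)
  then have "smay ?p"
    unfolding smay_def ssuccessful_def by auto
  with reach show ?thesis
    unfolding smust_def smay_def ssuccessful_def by blast
qed

lemma not_lmust_translation:
  assumes ws: "ws = u @ P i # v" and run: "exec IS u = Some C" and "C i"
    and parks: "\<And>E. \<not> E i \<Longrightarrow> \<exists>E'. exec E u = Some E' \<and> E' i"
  shows "\<exists>k. \<not> lmust (trproc ws wr (add_mset (SRecv SZero) (replicate_mset (Suc k) (SSend SCheck))), IS)"
proof -
  have "\<forall>x\<in>#{#(P i # v, True)#}. \<exists>w e. x = (P i # w, e)"
    by auto
  from not_lmust_parking[where C = C, OF parks \<open>C i\<close> this, of wr v True]
  obtain k where stuck: "\<not> lmust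
      (add_mset (P i # v, True) (add_mset (wr, False) (replicate_mset k (u @ P i # v, True))), C)"
    by (auto simp: add_mset_commute)
  have "trproc ws wr (add_mset (SRecv SZero) (replicate_mset (Suc k) (SSend SCheck)))
      = add_mset (u @ P i # v, True) (add_mset (wr, False) (replicate_mset k (u @ P i # v, True)))"
    unfolding trproc_def ws by simp
  with lsteps_exec[OF run] stuck show ?thesis
    using lmust_lsteps by metis
qed

theorem lemma5p11:
  fixes IS :: lstore
  shows "\<not> (\<exists>ws wr. wf_word 2 ws \<and> wf_word 2 wr \<and>
              btype_PP IS ws 1 \<and> btype_P IS wr 2 \<and>
              correct_translation IS ws wr)"
proof
  assume "\<exists>ws wr. wf_word 2 ws \<and> wf_word 2 wr \<and>
              btype_PP IS ws 1 \<and> btype_P IS wr 2 \<and>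
              correct_translation IS ws wr"
  then obtain ws wr where "wf_word 2 ws" and "btype_PP IS ws 1" and "btype_P IS wr 2"
    and correct: "correct_translation IS ws wr"
    by blast
  from \<open>btype_P IS wr 2\<close> have "IS 2"
    by (rule btype_P_initially_full)
  with \<open>wf_word 2 ws\<close> have "\<forall>s\<in>set ws. lidx s = 1 \<or> IS (lidx s)"
    unfolding wf_word_def by (metis One_nat_def le_Suc_eq le_antisym numeral_2_eq_2)
  with \<open>btype_PP IS ws 1\<close> obtain u v C where ws: "ws = u @ P 1 # v" and run: "exec IS u = Some C"
    and "C 1" and parks: "\<And>E. \<not> E 1 \<Longrightarrow> \<exists>E'. exec E u = Some E' \<and> E' 1"
    using btype_PP_parks by blast
  from not_lmust_translation[where i = 1, OF ws run \<open>C 1\<close> parks] obtain k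
    where "\<not> lmust (trproc ws wr (add_mset (SRecv SZero) (replicate_mset (Suc k) (SSend SCheck))), IS)"
    by blast
  with correct smust_recv_sends show False
    unfolding correct_translation_def by blast
qed

end
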